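(* There exists $N$ such that for all integers $n\ge N$, all $k\in\{2,\dots,n-1\}$ and all $\gamma\in(0,1)$ satisfying $\frac{k}{\gamma}\le\frac{\sqrt n}{100}$, the non-deterministic communication complexity (in the $k$-party number-in-hand model) of $\mathrm{DISJ}'_{k,\gamma}(n)$ is at least $\frac{\gamma^2 n}{10^4\cdot k}-2\log_2(n)$.
   Context: $[n]=\{1,\dots,n\}$, $\binom{[n]}{a}$ is the set of $a$-element subsets of $[n]$, $\triangle$ is symmetric difference. $\mathrm{DISJ}'_{k,\gamma}(n)$ is the following partial function of $k$ inputs: party $i$ ($i=1,\dots,k$) receives $X_i\in\binom{[n]}{\lfloor n/k\rfloor}$; it is promised that either $X_1,\dots,X_k$ are pairwise disjoint (then the value is $1$) or $|X_i\triangle X_{i'}|\le\gamma\lfloor n/k\rfloor$ for all $i,i'\in[k]$ (then the value is $0$). Number-in-hand model: $k$ parties compute a (partial) function $f\colon\mathcal X_1\times\dots\times\mathcal X_k\to\{0,1\}$, party $i$ knowing only $X_i\in\mathcal X_i$; they write binary messages on a shared blackboard seen by all. A deterministic protocol specifies, as a function of the blackboard contents, whose turn it is to write, and the message written (a function of the blackboard and that party's input); at the end the output bit is a function of the blackboard contents. Its cost $CC(\pi)$ is the maximum over inputs of the number of bits written. A non-deterministic protocol is a finite set $\mathcal P$ of deterministic protocols, with cost $CC(\mathcal P)=\lceil\log_2|\mathcal P|\rceil+\max_{\pi\in\mathcal P}CC(\pi)$. It computes $f$ if for every input with $f=1$ some $\pi\in\mathcal P$ outputs $1$, and for every input with $f=0$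 every $\pi\in\mathcal P$ outputs $0$. The non-deterministic communication complexity of $f$ is the minimum cost of a non-deterministic protocol computing $f$. *)

theory Defs
  imports Complex_Main
begin

text \<open>The blackboard is a bit string. nxt gives, as a function of the blackboard,
  whose turn it is (None = the protocol has ended); msg gives the bit written,
  as a function of the blackboard and the input of the party whose turn it is;
  out gives the proto_out bit as a function of the blackboard.
  Party inputs are n-element subsets of nat; an input profile is X :: nat => nat set
  with X i the input of party i (i in 1..k).\<close>

record proto =
  nxt :: "bool list \<Rightarrow> nat option"
  msg :: "bool list \<Rightarrow> nat set \<Rightarrow> bool"
  out :: "bool list \<Rightarrow> bool"

fun transcript :: "proto \<Rightarrow> (nat \<Rightarrow> nat set) \<Rightarrow> nat \<Rightarrow> bool list \<Rightarrow> bool list" where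
  "transcript p X 0 b = b"
| "transcript p X (Suc m) b =
     (case nxt p b of None \<Rightarrow> b
      | Some i \<Rightarrow> transcript p X m (b @ [msg p b (X i)]))"

definition halts :: "proto \<Rightarrow> (nat \<Rightarrow> nat set) \<Rightarrow> nat \<Rightarrow> bool" where
  "halts p X m \<longleftrightarrow> nxt p (transcript p X m []) = None"

text \<open>Number of bits written on input X (= length of the final blackboard).\<close>
definition cost :: "proto \<Rightarrow> (nat \<Rightarrow> nat set) \<Rightarrow> nat" where
  "cost p X = (LEAST m. halts p X m)"

definition proto_out :: "proto \<Rightarrow> (nat \<Rightarrow> nat set) \<Rightarrow> bool" where
  "proto_out p X = out p (transcript p X (cost p X) [])"

definition inputs :: "nat \<Rightarrow> nat \<Rightarrow> (nat \<Rightarrow> nat set) set" where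
  "inputs n k = {X. (\<forall>i\<in>{1..k}. X i \<subseteq> {1..n} \<and> card (X i) = n div k)
                   \<and> (\<forall>i. i \<notin> {1..k} \<longrightarrow> X i = {})}"

definition valid_proto :: "nat \<Rightarrow> nat \<Rightarrow> proto \<Rightarrow> bool" where
  "valid_proto n k p \<longleftrightarrow>
     (\<forall>b i. nxt p b = Some i \<longrightarrow> i \<in> {1..k}) \<and>
     (\<forall>X\<in>inputs n k. \<exists>m. halts p X m)"

definition CC :: "nat \<Rightarrow> nat \<Rightarrow> proto \<Rightarrow> nat" where
  "CC n k p = Max (cost p ` inputs n k)"

definition symdiff :: "'a set \<Rightarrow> 'a set \<Rightarrow> 'a set" where
  "symdiff A B = (A - B) \<union> (B - A)"

definition disj_yes :: "nat \<Rightarrow> (nat \<Rightarrow> nat set) \<Rightarrow> bool" where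
  "disj_yes k X \<longleftrightarrow> (\<forall>i\<in>{1..k}. \<forall>j\<in>{1..k}. i \<noteq> j \<longrightarrow> X i \<inter> X j = {})"

definition disj_no :: "nat \<Rightarrow> nat \<Rightarrow> real \<Rightarrow> (nat \<Rightarrow> nat set) \<Rightarrow> bool" where
  "disj_no n k \<gamma> X \<longleftrightarrow>
     (\<forall>i\<in>{1..k}. \<forall>j\<in>{1..k}. real (card (symdiff (X i) (X j))) \<le> \<gamma> * real (n div k))"

text \<open>A non-deterministic protocol (finite set of valid deterministic protocols)
  computing DISJ'_{k,gamma}(n).\<close>
definition nd_computes :: "nat \<Rightarrow> nat \<Rightarrow> real \<Rightarrow> proto set \<Rightarrow> bool" where
  "nd_computes n k \<gamma> P \<longleftrightarrow>
     finite P \<and> P \<noteq> {} \<and> (\<forall>p\<in>P. valid_proto n k p) \<and>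
     (\<forall>X\<in>inputs n k.
        (disj_yes k X \<longrightarrow> (\<exists>p\<in>P. proto_out p X)) \<and>
        (disj_no n k \<gamma> X \<longrightarrow> (\<forall>p\<in>P. \<not> proto_out p X)))"

definition nd_cost :: "nat \<Rightarrow> nat \<Rightarrow> proto set \<Rightarrow> nat" where
  "nd_cost n k P = nat \<lceil>log 2 (real (card P))\<rceil> + Max (CC n k ` P)"

definition NCC_DISJ :: "nat \<Rightarrow> nat \<Rightarrow> real \<Rightarrow> nat" where
  "NCC_DISJ n k \<gamma> = Inf {nd_cost n k P | P. nd_computes n k \<gamma> P}"

end

(*
  A non-deterministic protocol must accept every yes-instance. To a word s over {0..<k} of length
  m = n div k associate the input in which party i takes, from each of the m blocks of k consecutive
  integers, the element selected by the corresponding letter of s shifted by i; these sets are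
  pairwise disjoint, so some protocol of P accepts, and s is labelled by that protocol and its
  transcript. If a label class were large, a Talagrand-type concentration inequality on the Hamming
  space would give a word within distance gamma m / 4 of a shift of a member of the class in every
  coordinate; gluing those coordinates yields a no-instance on which, by the rectangle property, the
  protocol still accepts. Hence each class has at most k * k^m * exp (- gamma^2 m / 64) words, and
  counting the k^m words gives |P| * 2^(CC + 1) >= exp (gamma^2 m / 64) / k.
*)

theory Submission
  imports Defs
begin

lemma transcript_halted: "nxt p b = None \<Longrightarrow> transcript p X d b = b"
  by (cases d) auto

lemma transcript_add: "transcript p X (a + d) b = transcript p X d (transcript p X a b)"
  by (induction a arbitrary: b) (auto split: option.split simp: transcript_halted)

lemma transcript_extends: "\<exists>s. transcript p X m b = b @ s"
proof (induction m arbitrary: b)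
  case (Suc m)
  show ?case
  proof (cases "nxt p b")
    case (Some i)
    then show ?thesis using Suc.IH[of "b @ [msg p b (X i)]"] by auto
  qed simp
qed simp

lemma length_transcript_le: "length (transcript p X m b) \<le> length b + m"
proof (induction m arbitrary: b)
  case (Suc m)
  show ?case
  proof (cases "nxt p b")
    case (Some i)
    then show ?thesis using Suc.IH[of "b @ [msg p b (X i)]"] by simp
  qed simp
qed simp

definition final_board :: "proto \<Rightarrow> (nat \<Rightarrow> nat set) \<Rightarrow> bool list" where
  "final_board p X = transcript p X (cost p X) []"

lemma halts_cost: "valid_proto n k p \<Longrightarrow> X \<in> inputs n k \<Longrightarrow> halts p X (cost p X)"
  unfolding valid_proto_def cost_def by (meson LeastI_ex)

lemma cost_le: "halts p X m \<Longrightarrow> cost p X \<le> m"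
  unfolding cost_def by (rule Least_le)

lemma transcript_after_halt:
  assumes "halts p X a" "a \<le> c"
  shows "transcript p X c [] = transcript p X a []"
  using transcript_add[of p X a "c - a" "[]"] assms
  by (simp add: halts_def transcript_halted)

lemma transcript_eq_final_board:
  "valid_proto n k p \<Longrightarrow> X \<in> inputs n k \<Longrightarrow> cost p X \<le> c \<Longrightarrow> transcript p X c [] = final_board p X"
  unfolding final_board_def using transcript_after_halt halts_cost by blast

lemma length_final_board_le_CC:
  assumes "X \<in> inputs n k"
  shows "length (final_board p X) \<le> CC n k p"
proof -
  have "finite (inputs n k)"
  proof (rule finite_subset)
    show "inputs n k \<subseteq> {X. \<forall>i. (i \<in> {1..k} \<longrightarrow> X i \<in> Pow {1..n}) \<and> (i \<notin> {1..k} \<longrightarrow> X i = {})}"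
      unfolding inputs_def by auto
  qed (intro finite_set_of_finite_funs; simp)
  then have "cost p X \<le> CC n k p"
    unfolding CC_def using assms by (intro Max_ge) auto
  then show ?thesis
    unfolding final_board_def using length_transcript_le[of p X "cost p X" "[]"] by simp
qed

text \<open>The rectangle property of number-in-hand protocols: each message depends only on the board
  and on one coordinate of the input.\<close>
lemma transcript_mix:
  assumes "Ys \<noteq> {}" "\<forall>i. \<exists>Y\<in>Ys. Z i = Y i" "\<forall>Y\<in>Ys. transcript p Y c b = t"
  shows "transcript p Z c b = t"
  using assms(3)
proof (induction c arbitrary: b)
  case 0
  then show ?case using assms(1) by auto
next
  case (Suc c)
  show ?case
  proof (cases "nxt p b")
    case None
    then show ?thesis using Suc.prems assms(1) by auto
  next
    case (Some i)
    obtain Y0 where Y0: "Y0 \<in> Ys" "Z i = Y0 i" using assms(2) by blast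
    have next_t: "transcript p Y c (b @ [msg p b (Y i)]) = t" if "Y \<in> Ys" for Y
      using Suc.prems that Some by auto
    have "msg p b (Y i) = t ! length b" if "Y \<in> Ys" for Y
      using transcript_extends[of p Y c "b @ [msg p b (Y i)]"] next_t[OF that]
      by (auto simp: nth_append)
    then have "msg p b (Y i) = msg p b (Z i)" if "Y \<in> Ys" for Y
      using that Y0 by metis
    then show ?thesis
      using Suc.IH[of "b @ [msg p b (Z i)]"] next_t Some by simp
  qed
qed

lemma final_board_mix:
  assumes "valid_proto n k p" "finite Ys" "Ys \<noteq> {}" "Ys \<subseteq> inputs n k" "Z \<in> inputs n k"
    "\<forall>i. \<exists>Y\<in>Ys. Z i = Y i" "\<forall>Y\<in>Ys. final_board p Y = t"
  shows "final_board p Z = t"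
proof -
  define c where "c = Max (cost p ` insert Z Ys)"
  have cost_le_c: "cost p Y \<le> c" if "Y \<in> insert Z Ys" for Y
    unfolding c_def using assms(2) that by auto
  have "\<forall>Y\<in>Ys. transcript p Y c [] = t"
    using transcript_eq_final_board[OF assms(1)] cost_le_c assms(4,7) by auto
  then have "transcript p Z c [] = t" using transcript_mix[OF assms(3,6)] by blast
  then show ?thesis using transcript_eq_final_board[OF assms(1,5)] cost_le_c by auto
qed

definition words :: "nat \<Rightarrow> nat \<Rightarrow> nat list set" where
  "words k m = {xs. set xs \<subseteq> {..<k} \<and> length xs = m}"

lemma finite_words: "finite (words k m)"
  unfolding words_def by (rule finite_lists_length_eq) auto

lemma card_words: "card (words k m) = k ^ m"
  unfolding words_def using card_lists_length_eq[of "{..<k}" m] by simp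

lemma words_0: "words k 0 = {[]}"
  unfolding words_def by auto

lemma Cons_in_words_iff [simp]: "w # x \<in> words k (Suc m) \<longleftrightarrow> w < k \<and> x \<in> words k m"
  unfolding words_def by auto

lemma length_words: "x \<in> words k m \<Longrightarrow> length x = m"
  unfolding words_def by simp

lemma nth_words_less: "v \<in> words k m \<Longrightarrow> g < length v \<Longrightarrow> v ! g < k"
  unfolding words_def using nth_mem[of g v] by (auto simp del: nth_mem)

lemma words_SucE:
  assumes "xs \<in> words k (Suc m)"
  obtains w x where "xs = w # x" "w < k" "x \<in> words k m"
  using assms unfolding words_def by (cases xs) auto

lemma sum_words_Suc: "(\<Sum>x\<in>words k (Suc m). f x) = (\<Sum>w<k. \<Sum>x\<in>words k m. f (w # x))"
proof -
  have "words k (Suc m) = (\<lambda>(w, x). w # x) ` ({..<k} \<times> words k m)"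
    by (auto elim!: words_SucE)
  moreover have "inj_on (\<lambda>(w, x). w # x) ({..<k} \<times> words k m)"
    by (auto simp: inj_on_def)
  ultimately show ?thesis
    by (simp add: sum.reindex sum.cartesian_product case_prod_beta')
qed

fun hamming :: "'a list \<Rightarrow> 'a list \<Rightarrow> nat" where
  "hamming (x # xs) (y # ys) = (if x = y then 0 else 1) + hamming xs ys"
| "hamming _ _ = 0"

lemma hamming_sym: "hamming xs ys = hamming ys xs"
  by (induction xs ys rule: hamming.induct) auto

lemma hamming_triangle:
  "length xs = length ys \<Longrightarrow> length ys = length zs \<Longrightarrow> hamming xs zs \<le> hamming xs ys + hamming ys zs"
proof (induction xs arbitrary: ys zs)
  case (Cons x xs)
  then obtain y ys' z zs' where "ys = y # ys'" "zs = z # zs'"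
    by (metis length_Suc_conv)
  then show ?case using Cons.IH[of ys' zs'] Cons.prems by auto
qed simp

lemma hamming_eq_card:
  "length xs = length ys \<Longrightarrow> hamming xs ys = card {g. g < length xs \<and> xs ! g \<noteq> ys ! g}"
proof (induction xs arbitrary: ys)
  case (Cons x xs)
  then obtain y ys' where ys: "ys = y # ys'" by (metis length_Suc_conv)
  have "{g. g < Suc (length xs) \<and> (x # xs) ! g \<noteq> (y # ys') ! g}
      = (if x \<noteq> y then {0} else {}) \<union> Suc ` {g. g < length xs \<and> xs ! g \<noteq> ys' ! g}"
    by (auto simp: image_iff less_Suc_eq_0_disj)
  then show ?case using Cons.IH[of ys'] Cons.prems unfolding ys by (simp add: card_image)
qed simp

definition dist_set :: "'a list set \<Rightarrow> 'a list \<Rightarrow> nat" where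
  "dist_set S x = Min (hamming x ` S)"

lemma dist_set_le: "finite S \<Longrightarrow> y \<in> S \<Longrightarrow> dist_set S x \<le> hamming x y"
  unfolding dist_set_def by auto

lemma dist_set_attained:
  assumes "finite S" "S \<noteq> {}"
  obtains y where "y \<in> S" "dist_set S x = hamming x y"
proof -
  have "Min (hamming x ` S) \<in> hamming x ` S" using assms by (intro Min_in) auto
  then show ?thesis using that unfolding dist_set_def by auto
qed

definition tails :: "'a list set \<Rightarrow> 'a list set" where
  "tails A = {y. \<exists>w. w # y \<in> A}"

definition slice :: "'a list set \<Rightarrow> 'a \<Rightarrow> 'a list set" where
  "slice A w = {y. w # y \<in> A}"

lemma tails_subset_words: "A \<subseteq> words k (Suc m) \<Longrightarrow> tails A \<subseteq> words k m"
  unfolding tails_def by auto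

lemma slice_subset_tails: "slice A w \<subseteq> tails A"
  unfolding tails_def slice_def by auto

lemma tails_nonempty: "A \<subseteq> words k (Suc m) \<Longrightarrow> A \<noteq> {} \<Longrightarrow> tails A \<noteq> {}"
  unfolding tails_def by (auto elim!: words_SucE)

lemma card_eq_sum_card_slice:
  assumes "A \<subseteq> words k (Suc m)"
  shows "card A = (\<Sum>w<k. card (slice A w))"
proof -
  have "A = (\<lambda>(w, y). w # y) ` (SIGMA w:{..<k}. slice A w)"
    using assms unfolding slice_def by (force elim!: words_SucE)
  moreover have "inj_on (\<lambda>(w, y). w # y) (SIGMA w:{..<k}. slice A w)"
    by (auto simp: inj_on_def)
  moreover have "finite (slice A w)" for w
    using slice_subset_tails tails_subset_words[OF assms] finite_words finite_subset by metis
  ultimately have "card A = card (SIGMA w:{..<k}. slice A w)" by (metis card_image)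
  also have "\<dots> = (\<Sum>w<k. card (slice A w))" using \<open>\<And>w. finite (slice A w)\<close> by (simp add: card_SigmaI)
  finally show ?thesis .
qed

lemma dist_set_Cons_le_tails:
  assumes "A \<subseteq> words k (Suc m)" "A \<noteq> {}"
  shows "dist_set A (w # x) \<le> 1 + dist_set (tails A) x"
proof -
  have fin: "finite A" "finite (tails A)"
    using assms finite_subset finite_words tails_subset_words by metis+
  obtain y where y: "y \<in> tails A" "dist_set (tails A) x = hamming x y"
    using dist_set_attained[OF fin(2) tails_nonempty[OF assms]] by blast
  then obtain w' where "w' # y \<in> A" unfolding tails_def by auto
  then have "dist_set A (w # x) \<le> hamming (w # x) (w' # y)" using dist_set_le[OF fin(1)] by blast
  also have "\<dots> \<le> 1 + hamming x y" by simp
  finally show ?thesis using y by simp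
qed

lemma dist_set_Cons_le_slice:
  assumes "finite A" "slice A w \<noteq> {}"
  shows "dist_set A (w # x) \<le> dist_set (slice A w) x"
proof -
  have "slice A w \<subseteq> tl ` A" unfolding slice_def by force
  then have "finite (slice A w)" using assms(1) finite_surj by blast
  then obtain y where y: "y \<in> slice A w" "dist_set (slice A w) x = hamming x y"
    using dist_set_attained assms(2) by blast
  then have "dist_set A (w # x) \<le> hamming (w # x) (w # y)"
    using dist_set_le[OF assms(1)] unfolding slice_def by blast
  then show ?thesis using y by simp
qed

lemma mult_one_plus_exp_le_exp_sq:
  fixes u t :: real
  assumes "0 \<le> u" "u \<le> 1" "0 \<le> t" "t \<le> 1/2"
  shows "u * (1 + exp t * (1 - u)) \<le> exp (t^2)"
proof -
  define E where "E = exp t"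
  have E1: "1 \<le> E" unfolding E_def using assms by simp
  have "E - 1 \<le> 2 * t" unfolding E_def using exp_bound_lemma[of t] assms by simp
  then have sq: "(E - 1)^2 \<le> 4 * t^2"
    using E1 power_mono[of "E - 1" "2 * t" 2] by (simp add: power_mult_distrib)
  have "4 * E * (u * (1 + E * (1 - u))) = (1 + E)^2 - (1 + E - 2*E*u)^2"
    by (simp add: algebra_simps power2_eq_square)
  also have "\<dots> \<le> (1 + E)^2" by simp
  also have "\<dots> = 4 * E + (E - 1)^2" by (simp add: algebra_simps power2_eq_square)
  also have "\<dots> \<le> 4 * E * (1 + t^2)"
    using sq E1 mult_right_mono[OF E1, of "4 * t^2"] by (simp add: algebra_simps)
  finally have "u * (1 + E * (1 - u)) \<le> 1 + t^2" using E1 by simp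
  also have "\<dots> \<le> exp (t^2)" by simp
  finally show ?thesis unfolding E_def .
qed

lemma le_interpolated_bound:
  fixes S a b E Q :: real
  assumes "0 \<le> S" "0 < b" "0 \<le> a" "a \<le> b" "1 \<le> E" "0 \<le> Q" "S * b \<le> E * Q"
    and "0 < a \<Longrightarrow> S * a \<le> Q"
  shows "S * b \<le> Q * (1 + E * (1 - a / b))"
proof (cases "a * E \<le> b")
  case True
  then have "E \<le> 1 + E * (1 - a / b)" using assms(2) by (simp add: field_simps)
  then have "E * Q \<le> Q * (1 + E * (1 - a / b))" using assms(6) by (metis mult.commute mult_right_mono)
  then show ?thesis using assms(7) by linarith
next
  case False
  then have a0: "0 < a" using assms by (cases "a = 0") auto
  have "b * (b - a) \<le> (E * a) * (b - a)" using False assms by (intro mult_right_mono) (auto simp: mult.commute)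
  then have key: "b / a \<le> 1 + E * (1 - a / b)" using a0 assms(2) by (simp add: field_simps)
  have "S * b = (S * a) * (b / a)" using a0 by simp
  also have "\<dots> \<le> Q * (b / a)" using assms(8)[OF a0] a0 assms(2) by (intro mult_right_mono) auto
  also have "\<dots> \<le> Q * (1 + E * (1 - a / b))" using key assms(6) by (intro mult_left_mono) auto
  finally show ?thesis .
qed

lemma letter_sum_bound:
  fixes t M :: real
  assumes A: "A \<subseteq> words k (Suc m)" "A \<noteq> {}" and t: "0 \<le> t"
    and IH: "\<And>B. B \<subseteq> words k m \<Longrightarrow> B \<noteq> {} \<Longrightarrow> (\<Sum>x\<in>words k m. exp (t * dist_set B x)) * card B \<le> M"
  shows "(\<Sum>x\<in>words k m. exp (t * dist_set A (w # x))) * card (tails A)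
           \<le> M * (1 + exp t * (1 - card (slice A w) / card (tails A)))"
proof (rule le_interpolated_bound)
  let ?S = "\<Sum>x\<in>words k m. exp (t * dist_set A (w # x))"
  have B: "tails A \<subseteq> words k m" "tails A \<noteq> {}"
    using tails_subset_words tails_nonempty A by blast+
  have finB: "finite (tails A)" using finite_subset[OF B(1) finite_words] .
  have finA: "finite A" using finite_subset[OF A(1) finite_words] .
  show "0 < real (card (tails A))" using finB B(2) by (simp add: card_gt_0_iff)
  show "real (card (slice A w)) \<le> real (card (tails A))"
    using card_mono[OF finB slice_subset_tails] by simp
  have "0 \<le> (\<Sum>x\<in>words k m. exp (t * dist_set (tails A) x)) * card (tails A)"
    by (intro mult_nonneg_nonneg sum_nonneg) auto
  then show "0 \<le> M" using IH[OF B] by linarith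
  have "t * dist_set A (w # x) \<le> t + t * dist_set (tails A) x" for x
    using mult_left_mono[OF _ t, of "dist_set A (w # x)" "1 + dist_set (tails A) x"]
      dist_set_Cons_le_tails[OF A, of w x] by (simp add: distrib_left)
  then have "?S \<le> (\<Sum>x\<in>words k m. exp t * exp (t * dist_set (tails A) x))"
    by (intro sum_mono) (simp flip: exp_add)
  also have "\<dots> = exp t * (\<Sum>x\<in>words k m. exp (t * dist_set (tails A) x))"
    by (simp add: sum_distrib_left)
  finally have "?S * card (tails A) \<le> (exp t * (\<Sum>x\<in>words k m. exp (t * dist_set (tails A) x))) * card (tails A)"
    by (rule mult_right_mono) simp
  also have "\<dots> \<le> exp t * M" using IH[OF B] by simp
  finally show "?S * card (tails A) \<le> exp t * M" .
  show "?S * card (slice A w) \<le> M" if "0 < real (card (slice A w))"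
  proof -
    have ne: "slice A w \<noteq> {}" using that by auto
    have sub: "slice A w \<subseteq> words k m" using subset_trans[OF slice_subset_tails B(1)] .
    have "?S \<le> (\<Sum>x\<in>words k m. exp (t * dist_set (slice A w) x))"
      using dist_set_Cons_le_slice[OF finA ne] t by (intro sum_mono) (simp add: mult_left_mono)
    then have "?S * card (slice A w) \<le> (\<Sum>x\<in>words k m. exp (t * dist_set (slice A w) x)) * card (slice A w)"
      by (intro mult_right_mono) auto
    also have "\<dots> \<le> M" using IH[OF sub ne] .
    finally show ?thesis .
  qed
  show "0 \<le> ?S" by (intro sum_nonneg) simp
qed (use t in simp_all)

lemma concentration_step:
  fixes t :: real
  assumes A: "A \<subseteq> words k (Suc m)" "A \<noteq> {}" and t: "0 \<le> t" "t \<le> 1/2"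
    and IH: "\<And>B. B \<subseteq> words k m \<Longrightarrow> B \<noteq> {} \<Longrightarrow>
               (\<Sum>x\<in>words k m. exp (t * dist_set B x)) * card B \<le> (real k ^ m)^2 * exp (t^2 * m)"
  shows "(\<Sum>x\<in>words k (Suc m). exp (t * dist_set A x)) * card A \<le> (real k ^ Suc m)^2 * exp (t^2 * Suc m)"
proof -
  define M where "M = (real k ^ m)^2 * exp (t^2 * m)"
  define E where "E = exp t"
  define a where "a = real (card A)"
  define b where "b = real (card (tails A))"
  define u where "u = a / (k * b)"
  define T where "T = (\<Sum>x\<in>words k (Suc m). exp (t * dist_set A x))"
  have finB: "finite (tails A)" using finite_subset[OF tails_subset_words[OF A(1)] finite_words] .
  have b0: "0 < b" unfolding b_def using finB tails_nonempty[OF A] by (simp add: card_gt_0_iff)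
  have a_sum: "a = (\<Sum>w<k. real (card (slice A w)))"
    unfolding a_def card_eq_sum_card_slice[OF A(1)] by simp
  have "0 < a" unfolding a_def using A finite_subset[OF A(1) finite_words] by (simp add: card_gt_0_iff)
  then have k0: "0 < k" using a_sum by (cases k) auto
  have "a \<le> (\<Sum>w<k. b)"
    unfolding a_sum b_def using card_mono[OF finB slice_subset_tails] by (intro sum_mono) simp
  then have u: "0 \<le> u" "u \<le> 1"
    unfolding u_def using \<open>0 < a\<close> b0 k0 by (auto simp: field_simps)
  have "T * b = (\<Sum>w<k. (\<Sum>x\<in>words k m. exp (t * dist_set A (w # x))) * b)"
    unfolding T_def sum_words_Suc by (simp add: sum_distrib_right)
  also have "\<dots> \<le> (\<Sum>w<k. M * (1 + E * (1 - card (slice A w) / b)))"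
    unfolding b_def M_def E_def by (rule sum_mono) (rule letter_sum_bound[OF A t(1) IH])
  also have "\<dots> = M * (k + E * (k - a / b))"
    by (simp add: sum.distrib sum_subtractf a_sum
        flip: sum_distrib_left sum_divide_distrib)
  also have "k + E * (k - a / b) = k * (1 + E * (1 - u))"
    unfolding u_def using k0 b0 by (simp add: field_simps)
  finally have Tb: "T * b \<le> M * k * (1 + E * (1 - u))" by (simp add: mult.assoc)
  have "T * a = (T * b) * (k * u)" unfolding u_def using b0 k0 by simp
  also have "\<dots> \<le> (M * k * (1 + E * (1 - u))) * (k * u)"
    using Tb u k0 by (intro mult_right_mono) auto
  also have "\<dots> = M * k^2 * (u * (1 + E * (1 - u)))" by (simp add: power2_eq_square)
  also have "\<dots> \<le> M * k^2 * exp (t^2)"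
    unfolding E_def M_def using mult_one_plus_exp_le_exp_sq[OF u t] by (intro mult_left_mono) auto
  also have "\<dots> = (real k ^ Suc m)^2 * exp (t^2 * Suc m)"
    unfolding M_def by (simp add: power_mult_distrib algebra_simps power2_eq_square flip: exp_add)
  finally show ?thesis unfolding T_def a_def .
qed

text \<open>Exponential moments of the Hamming distance to a set \<open>A\<close> of words, as in Talagrand's
  concentration inequality for product spaces: they are small unless \<open>A\<close> is small.\<close>
theorem hamming_concentration:
  fixes t :: real
  assumes "A \<subseteq> words k m" "A \<noteq> {}" "0 \<le> t" "t \<le> 1/2"
  shows "(\<Sum>x\<in>words k m. exp (t * dist_set A x)) * card A \<le> (real k ^ m)^2 * exp (t^2 * m)"
  using assms(1,2)
proof (induction m arbitrary: A)
  case 0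
  then have "A = {[]}" using words_0 by auto
  then show ?case by (simp add: words_0 dist_set_def)
next
  case (Suc m)
  show ?case by (rule concentration_step[OF Suc.prems assms(3,4) Suc.IH])
qed

text \<open>A word \<open>v\<close> of length \<open>m\<close> over \<open>{..<k}\<close> selects the element \<open>g k + v!g + 1\<close> from the
  \<open>g\<close>-th block \<open>{g k + 1 .. g k + k}\<close> of \<open>{1..k m}\<close>.\<close>
definition block_set :: "nat \<Rightarrow> nat list \<Rightarrow> nat set" where
  "block_set k v = (\<lambda>g. g * k + v ! g + 1) ` {..<length v}"

definition shift_word :: "nat \<Rightarrow> nat \<Rightarrow> nat list \<Rightarrow> nat list" where
  "shift_word k i s = map (\<lambda>x. (i + x) mod k) s"

text \<open>Party \<open>i\<close> gets the blocks selected by \<open>s\<close> shifted by \<open>i\<close>: distinct parties pick distinct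
  elements of every block, so these are always disjoint (yes-)instances.\<close>
definition yes_input :: "nat \<Rightarrow> nat list \<Rightarrow> nat \<Rightarrow> nat set" where
  "yes_input k s i = (if i \<in> {1..k} then block_set k (shift_word k i s) else {})"

lemma mult_add_eq_mult_addD:
  fixes k :: nat
  assumes "a < k" "b < k" "g * k + a = g' * k + b"
  shows "g = g' \<and> a = b"
proof -
  have "g = (g * k + a) div k" using assms(1) by simp
  also have "\<dots> = g'" unfolding assms(3) using assms(2) by simp
  finally have "g = g'" .
  then show ?thesis using assms(3) by simp
qed

lemma inj_on_block_index:
  assumes "v \<in> words k m"
  shows "inj_on (\<lambda>g. g * k + v ! g + 1) {..<length v}"
  using mult_add_eq_mult_addD nth_words_less[OF assms] by (intro inj_onI) (metis lessThan_iff add_right_cancel)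

lemma card_block_set: "v \<in> words k m \<Longrightarrow> card (block_set k v) = m"
  unfolding block_set_def using card_image[OF inj_on_block_index] length_words by fastforce

lemma block_set_subset:
  assumes "v \<in> words k m"
  shows "block_set k v \<subseteq> {1..k * m}"
proof
  fix x assume "x \<in> block_set k v"
  then obtain g where g: "g < m" "x = g * k + v ! g + 1"
    unfolding block_set_def using length_words[OF assms] by auto
  have "v ! g + 1 \<le> k" using nth_words_less[OF assms] g(1) length_words[OF assms] by fastforce
  then have "x \<le> (g + 1) * k" using g by simp
  also have "\<dots> \<le> m * k" using g(1) by (intro mult_right_mono) auto
  finally show "x \<in> {1..k * m}" using g by (simp add: mult.commute)
qed

lemma card_block_set_diff_le:
  assumes "length v = length w"
  shows "card (block_set k v - block_set k w) \<le> hamming v w"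
proof -
  let ?f = "\<lambda>g. g * k + v ! g + 1"
  have "block_set k v - block_set k w \<subseteq> ?f ` {g. g < length v \<and> v ! g \<noteq> w ! g}"
    unfolding block_set_def using assms by force
  then have "card (block_set k v - block_set k w) \<le> card (?f ` {g. g < length v \<and> v ! g \<noteq> w ! g})"
    by (intro card_mono) auto
  also have "\<dots> \<le> card {g. g < length v \<and> v ! g \<noteq> w ! g}" by (rule card_image_le) auto
  also have "\<dots> = hamming v w" using hamming_eq_card[OF assms] by simp
  finally show ?thesis .
qed

lemma card_symdiff_block_set_le:
  assumes "length v = length w"
  shows "card (symdiff (block_set k v) (block_set k w)) \<le> 2 * hamming v w"
proof -
  have "card (symdiff (block_set k v) (block_set k w))
        \<le> card (block_set k v - block_set k w) + card (block_set k w - block_set k v)"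
    unfolding symdiff_def by (rule card_Un_le)
  also have "\<dots> \<le> hamming v w + hamming w v"
    using card_block_set_diff_le assms by (metis add_mono)
  finally show ?thesis using hamming_sym[of w v] by simp
qed

lemma shift_word_in_words: "0 < k \<Longrightarrow> s \<in> words k m \<Longrightarrow> shift_word k i s \<in> words k m"
  unfolding shift_word_def words_def by auto

lemma inj_on_shift_word:
  assumes "0 < k"
  shows "inj_on (shift_word k i) (words k m)"
proof
  fix xs ys assume xs: "xs \<in> words k m" and ys: "ys \<in> words k m"
    and eq: "shift_word k i xs = shift_word k i ys"
  have len: "length xs = length ys" using xs ys by (simp add: length_words)
  show "xs = ys"
  proof (rule nth_equalityI)
    fix j assume j: "j < length xs"
    have "(i + xs ! j) mod k = (i + ys ! j) mod k"
      using arg_cong[OF eq, of "\<lambda>l. l ! j"] j len unfolding shift_word_def by simp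
    then have "xs ! j mod k = ys ! j mod k" by (simp add: nat_mod_eq_iff)
    then show "xs ! j = ys ! j" using nth_words_less[OF xs j] nth_words_less[OF ys] j len by simp
  qed (fact len)
qed

lemma yes_input_in_inputs:
  assumes "0 < k" "s \<in> words k (n div k)"
  shows "yes_input k s \<in> inputs n k"
proof -
  have "{1..k * (n div k)} \<subseteq> {1..n}" by auto
  then have "block_set k (shift_word k i s) \<subseteq> {1..n}" for i
    using block_set_subset[OF shift_word_in_words[OF assms], of i] by (rule subset_trans[rotated])
  moreover have "card (block_set k (shift_word k i s)) = n div k" for i
    using card_block_set[OF shift_word_in_words[OF assms]] .
  ultimately show ?thesis unfolding inputs_def yes_input_def by auto
qed

lemma disj_yes_yes_input:
  assumes "0 < k" "s \<in> words k m"
  shows "disj_yes k (yes_input k s)"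
  unfolding disj_yes_def
proof (intro ballI impI)
  fix i j assume i: "i \<in> {1..k}" and j: "j \<in> {1..k}" and "i \<noteq> j"
  then have "i mod k \<noteq> j mod k"
    by (metis atLeastAtMost_iff le_neq_implies_less mod_less mod_self nat_neq_iff not_one_le_zero)
  show "yes_input k s i \<inter> yes_input k s j = {}"
  proof (rule ccontr)
    assume "yes_input k s i \<inter> yes_input k s j \<noteq> {}"
    then obtain g g' where "g < length s" "g' < length s"
      "g * k + (i + s ! g) mod k + 1 = g' * k + (j + s ! g') mod k + 1"
      using i j unfolding yes_input_def block_set_def shift_word_def by auto
    then have "g = g' \<and> (i + s ! g) mod k = (j + s ! g') mod k"
      using mult_add_eq_mult_addD[of "(i + s ! g) mod k" k "(j + s ! g') mod k" g g'] assms(1) by simp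
    then have "(i + s ! g) mod k = (j + s ! g) mod k" by auto
    then have "i mod k = j mod k" by (simp add: nat_mod_eq_iff)
    with \<open>i mod k \<noteq> j mod k\<close> show False ..
  qed
qed

lemma card_far_from_set:
  fixes t r :: real
  assumes "A \<subseteq> words k m" "A \<noteq> {}" "0 \<le> t" "t \<le> 1/2"
  shows "real (card {x\<in>words k m. r < dist_set A x}) * card A \<le> (real k ^ m)^2 * exp (t^2 * m - t * r)"
proof -
  let ?F = "{x\<in>words k m. r < dist_set A x}"
  have "real (card ?F) * exp (t * r) = (\<Sum>x\<in>?F. exp (t * r))" by simp
  also have "\<dots> \<le> (\<Sum>x\<in>?F. exp (t * dist_set A x))"
    using assms(3) by (intro sum_mono) (auto intro: mult_left_mono)
  also have "\<dots> \<le> (\<Sum>x\<in>words k m. exp (t * dist_set A x))"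
    by (intro sum_mono2[OF finite_words]) auto
  finally have "real (card ?F) * exp (t * r) * card A \<le> (\<Sum>x\<in>words k m. exp (t * dist_set A x)) * card A"
    by (rule mult_right_mono) simp
  also have "\<dots> \<le> (real k ^ m)^2 * exp (t^2 * m)"
    by (rule hamming_concentration[OF assms])
  finally have "real (card ?F) * card A * exp (t * r) \<le> (real k ^ m)^2 * exp (t^2 * m - t * r) * exp (t * r)"
    by (simp add: exp_diff field_simps)
  then show ?thesis by simp
qed

lemma card_far_from_large_set_less:
  fixes t r c :: real
  assumes A: "A \<subseteq> words k m" and t: "0 \<le> t" "t \<le> 1/2" and c: "0 < c"
    and big: "c * real k ^ m * exp (t^2 * m - t * r) < card A"
  shows "real (card {x\<in>words k m. r < dist_set A x}) < real k ^ m / c"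
proof -
  let ?F = "{x\<in>words k m. r < dist_set A x}"
  have "0 \<le> c * real k ^ m * exp (t^2 * m - t * r)" using c by simp
  then have A0: "0 < real (card A)" using big by linarith
  then have "A \<noteq> {}" by auto
  have "0 < card (words k m)" using card_mono[OF finite_words A] A0 by linarith
  then have N0: "0 < real k ^ m" unfolding card_words by (metis of_nat_0_less_iff of_nat_power)
  have "real (card ?F) * card A \<le> (real k ^ m / c) * (c * real k ^ m * exp (t^2 * m - t * r))"
    using card_far_from_set[OF A \<open>A \<noteq> {}\<close> t, of r] c by (simp add: power2_eq_square mult.assoc)
  also have "\<dots> < (real k ^ m / c) * card A"
    using big N0 c by (intro mult_strict_left_mono) auto
  finally show ?thesis using A0 by (simp only: mult_less_cancel_right_pos)
qed

lemma exists_word_close_to_all: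
  fixes t r :: real
  assumes I: "finite I" "I \<noteq> {}" and S: "\<And>i. i \<in> I \<Longrightarrow> S i \<subseteq> words k m"
    and t: "0 \<le> t" "t \<le> 1/2"
    and big: "\<And>i. i \<in> I \<Longrightarrow> real (card I) * real k ^ m * exp (t^2 * m - t * r) < card (S i)"
  shows "\<exists>x\<in>words k m. \<forall>i\<in>I. \<exists>y\<in>S i. hamming x y \<le> r"
proof -
  define F where "F i = {x\<in>words k m. r < dist_set (S i) x}" for i
  have cI: "0 < real (card I)" using I by (simp add: card_gt_0_iff)
  have "real (card (\<Union>i\<in>I. F i)) \<le> (\<Sum>i\<in>I. real (card (F i)))"
    using card_UN_le[OF I(1), of F] by (simp flip: of_nat_sum)
  also have "\<dots> < (\<Sum>i\<in>I. real k ^ m / card I)"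
    using card_far_from_large_set_less[OF S t cI big] I unfolding F_def by (intro sum_strict_mono) auto
  also have "\<dots> = real (card (words k m))" using cI unfolding card_words by simp
  finally have less: "card (\<Union>i\<in>I. F i) < card (words k m)" by simp
  have "\<not> words k m \<subseteq> (\<Union>i\<in>I. F i)"
  proof
    assume sub: "words k m \<subseteq> (\<Union>i\<in>I. F i)"
    have "(\<Union>i\<in>I. F i) \<subseteq> words k m" unfolding F_def by blast
    then have "card (words k m) \<le> card (\<Union>i\<in>I. F i)"
      using card_mono[OF finite_subset[OF _ finite_words] sub] by blast
    with less show False by simp
  qed
  then obtain x where x: "x \<in> words k m" "\<forall>i\<in>I. x \<notin> F i" by blast
  have "\<exists>y\<in>S i. hamming x y \<le> r" if i: "i \<in> I" for i
  proof -
    have "0 \<le> real (card I) * real k ^ m * exp (t^2 * m - t * r)" by simp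
    then have "0 < real (card (S i))" using big[OF i] by linarith
    then have "S i \<noteq> {}" by auto
    then obtain y where "y \<in> S i" "dist_set (S i) x = hamming x y"
      using dist_set_attained[OF finite_subset[OF S[OF i] finite_words]] by blast
    moreover have "dist_set (S i) x \<le> r" using x i unfolding F_def by (simp add: not_less)
    ultimately show ?thesis by auto
  qed
  with x(1) show ?thesis by blast
qed

lemma proto_out_eq_out_final_board: "proto_out p X = out p (final_board p X)"
  unfolding proto_out_def final_board_def ..

lemma mixed_yes_input_in_inputs:
  assumes "0 < k" "\<And>i. i \<in> {1..k} \<Longrightarrow> sel i \<in> words k (n div k)"
  shows "(\<lambda>i. yes_input k (sel i) i) \<in> inputs n k"
  using yes_input_in_inputs[OF assms(1) assms(2)] unfolding inputs_def
  by (auto simp: yes_input_def)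

lemma mixed_yes_input_disj_no:
  fixes \<gamma> :: real
  assumes x: "x \<in> words k (n div k)" and sel: "\<And>i. i \<in> {1..k} \<Longrightarrow> sel i \<in> words k (n div k)"
    and close: "\<And>i. i \<in> {1..k} \<Longrightarrow> 4 * real (hamming x (shift_word k i (sel i))) \<le> \<gamma> * real (n div k)"
  shows "disj_no n k \<gamma> (\<lambda>i. yes_input k (sel i) i)"
  unfolding disj_no_def
proof (intro ballI)
  fix i j assume i: "i \<in> {1..k}" and j: "j \<in> {1..k}"
  let ?v = "shift_word k i (sel i)" and ?w = "shift_word k j (sel j)"
  have len: "length ?v = length x" "length ?w = length x"
    using length_words[OF sel[OF i]] length_words[OF sel[OF j]] length_words[OF x]
    by (simp_all add: shift_word_def)
  have "card (symdiff (yes_input k (sel i) i) (yes_input k (sel j) j)) \<le> 2 * hamming ?v ?w"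
    using card_symdiff_block_set_le[of ?v ?w k] len i j by (simp add: yes_input_def)
  also have "\<dots> \<le> 2 * hamming x ?v + 2 * hamming x ?w"
    using hamming_triangle[OF len(1) len(2)[symmetric]] hamming_sym[of ?v x] by linarith
  finally have "real (card (symdiff (yes_input k (sel i) i) (yes_input k (sel j) j)))
      \<le> real (2 * hamming x ?v + 2 * hamming x ?w)"
    by (rule of_nat_mono)
  also have "\<dots> = 2 * real (hamming x ?v) + 2 * real (hamming x ?w)" by simp
  also have "\<dots> \<le> \<gamma> * real (n div k)" using close[OF i] close[OF j] by linarith
  finally show "real (card (symdiff (yes_input k (sel i) i) (yes_input k (sel j) j))) \<le> \<gamma> * real (n div k)" .
qed

lemma final_board_mixed_yes_input:
  assumes valid: "valid_proto n k p" and "0 < k"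
    and sel: "\<And>i. i \<in> {1..k} \<Longrightarrow> sel i \<in> words k (n div k)"
    and tt: "\<And>i. i \<in> {1..k} \<Longrightarrow> final_board p (yes_input k (sel i)) = tt"
  shows "final_board p (\<lambda>i. yes_input k (sel i) i) = tt"
proof (rule final_board_mix[OF valid])
  let ?Ys = "(\<lambda>i. yes_input k (sel i)) ` {1..k}"
  show "finite ?Ys" "?Ys \<noteq> {}" using \<open>0 < k\<close> by auto
  show "?Ys \<subseteq> inputs n k" using yes_input_in_inputs[OF \<open>0 < k\<close> sel] by blast
  show "(\<lambda>i. yes_input k (sel i) i) \<in> inputs n k" by (rule mixed_yes_input_in_inputs[OF \<open>0 < k\<close> sel])
  show "\<forall>Y\<in>?Ys. final_board p Y = tt" using tt by blast
  show "\<forall>i. \<exists>Y\<in>?Ys. yes_input k (sel i) i = Y i"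
  proof
    fix i
    show "\<exists>Y\<in>?Ys. yes_input k (sel i) i = Y i"
    proof (cases "i \<in> {1..k}")
      case False
      then show ?thesis using \<open>0 < k\<close> by (intro bexI[of _ "yes_input k (sel 1)"]) (auto simp: yes_input_def)
    qed blast
  qed
qed

lemma glued_accepting_inputs_absurd:
  fixes \<gamma> :: real
  assumes valid: "valid_proto n k p"
    and rejects: "\<And>X. X \<in> inputs n k \<Longrightarrow> disj_no n k \<gamma> X \<Longrightarrow> \<not> proto_out p X"
    and k: "0 < k" and C: "C \<subseteq> words k (n div k)"
    and acc: "\<And>s. s \<in> C \<Longrightarrow> proto_out p (yes_input k s) \<and> final_board p (yes_input k s) = tt"
    and x: "x \<in> words k (n div k)" and sel_C: "\<And>i. i \<in> {1..k} \<Longrightarrow> sel i \<in> C"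
    and close: "\<And>i. i \<in> {1..k} \<Longrightarrow> 4 * real (hamming x (shift_word k i (sel i))) \<le> \<gamma> * real (n div k)"
  shows False
proof -
  let ?Z = "\<lambda>i. yes_input k (sel i) i"
  have sel_words: "sel i \<in> words k (n div k)" if "i \<in> {1..k}" for i
    using subsetD[OF C sel_C[OF that]] .
  have tt_sel: "final_board p (yes_input k (sel i)) = tt" if "i \<in> {1..k}" for i
    using acc[OF sel_C[OF that]] by simp
  have "final_board p ?Z = tt" by (rule final_board_mixed_yes_input[OF valid k sel_words tt_sel])
  moreover have "proto_out p (yes_input k (sel 1))" using acc sel_C k by simp
  ultimately have "proto_out p ?Z" using tt_sel[of 1] k by (simp add: proto_out_eq_out_final_board)
  moreover have "disj_no n k \<gamma> ?Z" by (rule mixed_yes_input_disj_no[OF x sel_words close])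
  moreover have "?Z \<in> inputs n k" by (rule mixed_yes_input_in_inputs[OF k sel_words])
  ultimately show False using rejects by simp
qed

lemma card_accepting_same_board_le:
  fixes \<gamma> :: real
  assumes valid: "valid_proto n k p"
    and rejects: "\<And>X. X \<in> inputs n k \<Longrightarrow> disj_no n k \<gamma> X \<Longrightarrow> \<not> proto_out p X"
    and k: "0 < k" and \<gamma>: "0 \<le> \<gamma>" "\<gamma> \<le> 4"
    and C: "C \<subseteq> words k (n div k)"
    and acc: "\<And>s. s \<in> C \<Longrightarrow> proto_out p (yes_input k s) \<and> final_board p (yes_input k s) = tt"
  shows "real (card C) \<le> real k * real k ^ (n div k) * exp (- (\<gamma>^2 * real (n div k) / 64))"
proof (rule ccontr)
  define m where "m = n div k"
  define t where "t = \<gamma> / 8"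
  define r where "r = \<gamma> * real m / 4"
  define S where "S i = shift_word k i ` C" for i
  assume "\<not> ?thesis"
  moreover have "t^2 * m - t * r = - (\<gamma>^2 * real m / 64)"
    unfolding t_def r_def by (simp add: power2_eq_square field_simps)
  moreover have "card (S i) = card C" for i
    unfolding S_def using inj_on_subset[OF inj_on_shift_word[OF k] C] by (rule card_image)
  ultimately have big: "real (card {1..k}) * real k ^ m * exp (t^2 * m - t * r) < card (S i)"
    if "i \<in> {1..k}" for i
    unfolding m_def by simp
  have S: "S i \<subseteq> words k m" for i unfolding S_def m_def using C shift_word_in_words[OF k] by blast
  have t: "0 \<le> t" "t \<le> 1/2" unfolding t_def using \<gamma> by auto
  have I: "{1..k} \<noteq> {}" using k by simp
  have "\<exists>x\<in>words k m. \<forall>i\<in>{1..k}. \<exists>y\<in>S i. hamming x y \<le> r"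
    by (rule exists_word_close_to_all[OF finite_atLeastAtMost I _ t big]) (rule S)
  then obtain x where x: "x \<in> words k m"
    and close: "\<forall>i\<in>{1..k}. \<exists>s. s \<in> C \<and> hamming x (shift_word k i s) \<le> r"
    unfolding S_def by blast
  from bchoice[OF close]
  obtain sel where sel: "\<forall>i\<in>{1..k}. sel i \<in> C \<and> hamming x (shift_word k i (sel i)) \<le> r" ..
  show False
  proof (rule glued_accepting_inputs_absurd[OF valid rejects k C acc])
    show "x \<in> words k (n div k)" using x unfolding m_def .
    show "sel i \<in> C" if "i \<in> {1..k}" for i using sel that by simp
    show "4 * real (hamming x (shift_word k i (sel i))) \<le> \<gamma> * real (n div k)" if "i \<in> {1..k}" for i
      using sel that unfolding r_def m_def by (simp add: mult.commute)
  qed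
qed

text \<open>Some protocol must compute \<open>DISJ'\<close>, otherwise \<open>NCC_DISJ\<close> is the junk value \<open>Inf {} = 0\<close>.\<close>
definition disj_check_proto :: "nat \<Rightarrow> proto" where
  "disj_check_proto n =
     \<lparr>nxt = (\<lambda>b. if length b < n then Some 1 else if length b = n then Some 2 else None),
      msg = (\<lambda>b S. if length b < n then Suc (length b) \<in> S else (\<forall>j<n. b ! j \<longrightarrow> Suc j \<notin> S)),
      out = (\<lambda>b. b ! n)\<rparr>"

lemma transcript_disj_check_proto_prefix:
  "a + l \<le> n \<Longrightarrow> transcript (disj_check_proto n) X l (map (\<lambda>j. Suc j \<in> X 1) [0..<a])
     = map (\<lambda>j. Suc j \<in> X 1) [0..<a + l]"
proof (induction l arbitrary: a)
  case (Suc l)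
  then show ?case
    using Suc.IH[of "Suc a"] by (simp add: disj_check_proto_def)
qed simp

lemma transcript_disj_check_proto:
  "transcript (disj_check_proto n) X (Suc n) []
     = map (\<lambda>j. Suc j \<in> X 1) [0..<n] @ [\<forall>j<n. Suc j \<in> X 1 \<longrightarrow> Suc j \<notin> X 2]"
  using transcript_add[of "disj_check_proto n" X n 1 "[]"]
    transcript_disj_check_proto_prefix[of 0 n n X]
  by (simp add: disj_check_proto_def)

lemma halts_disj_check_proto: "halts (disj_check_proto n) X (Suc n)"
  unfolding halts_def transcript_disj_check_proto by (simp add: disj_check_proto_def)

lemma proto_out_disj_check_proto:
  assumes "X 1 \<subseteq> {1..n}"
  shows "proto_out (disj_check_proto n) X \<longleftrightarrow> X 1 \<inter> X 2 = {}"
proof -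
  let ?p = "disj_check_proto n"
  have "halts ?p X (cost ?p X)"
    unfolding cost_def by (rule LeastI[of "halts ?p X", OF halts_disj_check_proto])
  moreover have "cost ?p X \<le> Suc n" by (rule cost_le[OF halts_disj_check_proto])
  ultimately have "transcript ?p X (Suc n) [] = transcript ?p X (cost ?p X) []"
    by (rule transcript_after_halt)
  then have "proto_out ?p X = out ?p (transcript ?p X (Suc n) [])"
    unfolding proto_out_def by simp
  also have "\<dots> \<longleftrightarrow> (\<forall>j<n. Suc j \<in> X 1 \<longrightarrow> Suc j \<notin> X 2)"
    unfolding transcript_disj_check_proto by (simp add: disj_check_proto_def nth_append)
  also have "\<dots> \<longleftrightarrow> (\<forall>x\<in>X 1. x \<notin> X 2)"
  proof (intro iffI ballI allI impI)
    fix x assume h: "\<forall>j<n. Suc j \<in> X 1 \<longrightarrow> Suc j \<notin> X 2" and x: "x \<in> X 1"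
    then obtain j where "x = Suc j" "j < n" using assms by (cases x) auto
    then show "x \<notin> X 2" using h x by blast
  qed simp
  finally show ?thesis by blast
qed

lemma nd_computes_disj_check_proto:
  fixes \<gamma> :: real
  assumes "2 \<le> k" "k \<le> n" "\<gamma> < 2"
  shows "nd_computes n k \<gamma> {disj_check_proto n}"
  unfolding nd_computes_def
proof (intro conjI ballI)
  have "\<forall>b i. nxt (disj_check_proto n) b = Some i \<longrightarrow> i \<in> {1..k}"
    using assms(1) by (simp add: disj_check_proto_def)
  then have "valid_proto n k (disj_check_proto n)"
    unfolding valid_proto_def using halts_disj_check_proto by blast
  then show "valid_proto n k p" if "p \<in> {disj_check_proto n}" for p using that by simp
next
  fix X assume X: "X \<in> inputs n k"
  have one_two: "1 \<in> {1..k}" "2 \<in> {1..k}" using assms(1) by auto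
  have sub: "X 1 \<subseteq> {1..n}" "X 2 \<subseteq> {1..n}" and card: "card (X 1) = n div k" "card (X 2) = n div k"
    using X one_two unfolding inputs_def by auto
  have out: "proto_out (disj_check_proto n) X \<longleftrightarrow> X 1 \<inter> X 2 = {}"
    by (rule proto_out_disj_check_proto[of X, OF sub(1)])
  show "disj_yes k X \<longrightarrow> (\<exists>p\<in>{disj_check_proto n}. proto_out p X)"
    using out one_two unfolding disj_yes_def by auto
  show "disj_no n k \<gamma> X \<longrightarrow> (\<forall>p\<in>{disj_check_proto n}. \<not> proto_out p X)"
  proof (intro impI ballI notI)
    fix p assume no: "disj_no n k \<gamma> X" and "p \<in> {disj_check_proto n}" and "proto_out p X"
    then have "X 1 \<inter> X 2 = {}" using out by simp
    then have "symdiff (X 1) (X 2) = X 1 \<union> X 2" unfolding symdiff_def by auto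
    then have "card (symdiff (X 1) (X 2)) = 2 * (n div k)"
      using card_Un_disjoint[OF finite_subset[OF sub(1)] finite_subset[OF sub(2)]] \<open>X 1 \<inter> X 2 = {}\<close> card
      by simp
    moreover have "0 < n div k" using assms(1,2) by (simp add: div_greater_zero_iff)
    moreover have "real (card (symdiff (X 1) (X 2))) \<le> \<gamma> * real (n div k)"
      using no one_two unfolding disj_no_def by blast
    ultimately show False using assms(3) by (simp add: mult_less_cancel_right)
  qed
qed simp_all

lemma NCC_DISJ_attained:
  fixes \<gamma> :: real
  assumes "2 \<le> k" "k \<le> n" "\<gamma> < 2"
  obtains P where "nd_computes n k \<gamma> P" "NCC_DISJ n k \<gamma> = nd_cost n k P"
proof -
  let ?costs = "{nd_cost n k P | P. nd_computes n k \<gamma> P}"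
  have "?costs \<noteq> {}" using nd_computes_disj_check_proto[OF assms] by blast
  then have "Inf ?costs \<in> ?costs" by (rule Inf_nat_def1)
  then show ?thesis using that unfolding NCC_DISJ_def by auto
qed

lemma card_le_card_image_mult_fibres:
  fixes c :: real
  assumes "finite A" "finite B" "f ` A \<subseteq> B" "\<And>b. b \<in> B \<Longrightarrow> real (card {a\<in>A. f a = b}) \<le> c"
  shows "real (card A) \<le> real (card B) * c"
proof -
  have "A = (\<Union>b\<in>B. {a\<in>A. f a = b})" using assms(3) by blast
  then have "real (card A) \<le> (\<Sum>b\<in>B. real (card {a\<in>A. f a = b}))"
    using card_UN_le[OF assms(2), of "\<lambda>b. {a\<in>A. f a = b}"] by (metis of_nat_le_iff of_nat_sum)
  also have "\<dots> \<le> (\<Sum>b\<in>B. c)" using assms(4) by (rule sum_mono)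
  finally show ?thesis by simp
qed

lemma card_bool_lists_length_le: "card {bs :: bool list. length bs \<le> c} < 2 ^ Suc c"
proof -
  have "(\<Sum>i\<le>c. (2::nat) ^ i) < 2 ^ Suc c" by (induction c) auto
  then show ?thesis using card_lists_length_le[of "UNIV :: bool set" c] by simp
qed

lemma one_le_protocols_times_fibre:
  fixes \<gamma> :: real
  assumes comp: "nd_computes n k \<gamma> P" and k: "0 < k" and \<gamma>: "0 \<le> \<gamma>" "\<gamma> \<le> 4"
  shows "1 \<le> real (card P) * 2 ^ Suc (Max (CC n k ` P)) * k * exp (- (\<gamma>^2 * real (n div k) / 64))"
proof -
  define m where "m = n div k"
  define Q where "Q = exp (- (\<gamma>^2 * real m / 64))"
  define boards where "boards = {bs :: bool list. length bs \<le> Max (CC n k ` P)}"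
  have P: "finite P" "\<And>p. p \<in> P \<Longrightarrow> valid_proto n k p"
    and accept: "\<And>X. X \<in> inputs n k \<Longrightarrow> disj_yes k X \<Longrightarrow> \<exists>p\<in>P. proto_out p X"
    and reject: "\<And>p X. p \<in> P \<Longrightarrow> X \<in> inputs n k \<Longrightarrow> disj_no n k \<gamma> X \<Longrightarrow> \<not> proto_out p X"
    using comp unfolding nd_computes_def by auto
  have yes: "yes_input k s \<in> inputs n k" "disj_yes k (yes_input k s)" if "s \<in> words k m" for s
    using yes_input_in_inputs[OF k] disj_yes_yes_input[OF k] that unfolding m_def by auto
  have "\<forall>s\<in>words k m. \<exists>p. p \<in> P \<and> proto_out p (yes_input k s)" using accept yes by blast
  from bchoice[OF this]
  obtain pp where pp: "\<forall>s\<in>words k m. pp s \<in> P \<and> proto_out (pp s) (yes_input k s)" ..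
  define label where "label s = (pp s, final_board (pp s) (yes_input k s))" for s
  have labels: "label ` words k m \<subseteq> P \<times> boards"
  proof (clarsimp simp: label_def boards_def)
    fix s assume s: "s \<in> words k m"
    have "length (final_board (pp s) (yes_input k s)) \<le> CC n k (pp s)"
      by (rule length_final_board_le_CC[OF yes(1)[OF s]])
    also have "\<dots> \<le> Max (CC n k ` P)" using P(1) pp s by (intro Max_ge) auto
    finally show "pp s \<in> P \<and> length (final_board (pp s) (yes_input k s)) \<le> Max (CC n k ` P)"
      using pp s by simp
  qed
  have fibres: "real (card {s\<in>words k m. label s = z}) \<le> real k * real k ^ m * Q" if "z \<in> P \<times> boards" for z
    unfolding m_def Q_def
  proof (rule card_accepting_same_board_le[OF P(2) reject k \<gamma>])
    show "proto_out (fst z) (yes_input k s) \<and> final_board (fst z) (yes_input k s) = snd z"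
      if "s \<in> {s\<in>words k (n div k). label s = z}" for s
      using that pp unfolding label_def m_def by auto
  qed (use that in auto)
  have "finite boards"
    unfolding boards_def using finite_lists_length_le[of "UNIV :: bool set"] by simp
  then have "real (card (words k m)) \<le> real (card (P \<times> boards)) * (real k * real k ^ m * Q)"
    using card_le_card_image_mult_fibres[OF finite_words _ labels fibres] P(1) by simp
  also have "\<dots> \<le> real (card P * 2 ^ Suc (Max (CC n k ` P))) * (real k * real k ^ m * Q)"
    using card_bool_lists_length_le unfolding boards_def Q_def card_cartesian_product
    by (intro mult_right_mono of_nat_mono mult_le_mono2) (simp_all add: less_imp_le)
  finally have "real k ^ m * 1 \<le> real k ^ m * (real (card P) * 2 ^ Suc (Max (CC n k ` P)) * k * Q)"
    unfolding card_words by (simp add: algebra_simps)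
  then show ?thesis unfolding Q_def m_def using k by simp
qed

lemma log_bound_of_count:
  fixes c k y :: real
  assumes "1 \<le> c * 2 ^ Suc d * k * exp (- y)" "0 < c" "0 < k" "0 \<le> y"
  shows "y - 1 - log 2 k \<le> log 2 c + d"
proof -
  have "0 \<le> log 2 (c * 2 ^ Suc d * k * exp (- y))" using assms by simp
  also have "\<dots> = log 2 c + log 2 (2 ^ Suc d) + log 2 k + log 2 (exp (- y))"
    using assms(2,3) by (simp add: log_mult)
  also have "log 2 (2 ^ Suc d) = Suc d" by (rule log_pow_cancel) simp_all
  also have "log 2 (exp (- y)) = - y / ln 2" by (simp add: log_def)
  finally have "y / ln 2 \<le> log 2 c + Suc d + log 2 k" by simp
  moreover have "y \<le> y / ln 2"
    using assms(4) ln_2_less_1 by (simp add: le_divide_eq mult_left_le)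
  ultimately show ?thesis by simp
qed

theorem nd_cost_lower_bound:
  fixes \<gamma> :: real
  assumes comp: "nd_computes n k \<gamma> P" and k: "0 < k" and \<gamma>: "0 \<le> \<gamma>" "\<gamma> \<le> 4"
  shows "\<gamma>^2 * real (n div k) / 64 - 1 - log 2 k \<le> real (nd_cost n k P)"
proof -
  have "0 < real (card P)" using comp unfolding nd_computes_def by (simp add: card_gt_0_iff)
  then have "\<gamma>^2 * real (n div k) / 64 - 1 - log 2 k \<le> log 2 (card P) + Max (CC n k ` P)"
    using log_bound_of_count[OF one_le_protocols_times_fibre[OF assms]] k by simp
  also have "\<dots> \<le> real (nd_cost n k P)"
    unfolding nd_cost_def by linarith
  finally show ?thesis .
qed

lemma ratio_bound_le_div_bound:
  fixes \<gamma> :: real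
  assumes "4 \<le> n" "0 < k" "k \<le> n" "0 \<le> \<gamma>" "\<gamma> \<le> 1"
  shows "\<gamma>^2 * real n / (10^4 * real k) - 2 * log 2 (real n) \<le> \<gamma>^2 * real (n div k) / 64 - 1 - log 2 k"
proof -
  have "n = k * (n div k) + n mod k" by simp
  moreover have "n mod k < k" using assms(2) by simp
  ultimately have "n \<le> k * (n div k) + k" by linarith
  then have "real n \<le> real k * (real (n div k) + 1)"
    by (metis distrib_left mult.right_neutral of_nat_add of_nat_le_iff of_nat_mult of_nat_1)
  then have "real n / real k \<le> real (n div k) + 1"
    using assms(2) by (simp add: divide_le_eq mult.commute)
  then have "\<gamma>^2 * (real n / real k) \<le> \<gamma>^2 * real (n div k) + \<gamma>^2"
    using mult_left_mono[of "real n / real k" "real (n div k) + 1" "\<gamma>^2"] by (simp add: distrib_left)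
  then have "\<gamma>^2 * real n / (10^4 * real k) \<le> (\<gamma>^2 * real (n div k) + \<gamma>^2) / 10^4"
    using divide_right_mono[of _ _ "10^4"] by simp
  also have "\<dots> \<le> \<gamma>^2 * real (n div k) / 64 + 1"
  proof -
    have key: "(g * y + g) / 10^4 \<le> g * y / 64 + 1" if "g \<le> 1" "0 \<le> g * y" for g y :: real
      using that by simp
    show ?thesis by (rule key) (simp_all add: assms(4,5) power_le_one)
  qed
  finally have "\<gamma>^2 * real n / (10^4 * real k) \<le> \<gamma>^2 * real (n div k) / 64 + 1" .
  moreover have "log 2 k \<le> log 2 n" using assms(2,3) by simp
  moreover have "2 \<le> log 2 n"
    using assms(1) log_le_cancel_iff[of 2 4 n] by (simp add: log_nat_power[of 2 2 2, simplified])
  ultimately show ?thesis by linarith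
qed

theorem theorem3:
  shows "\<exists>N::nat. \<forall>n\<ge>N. \<forall>k::nat. 2 \<le> k \<and> k \<le> n - 1 \<longrightarrow>
           (\<forall>\<gamma>::real. 0 < \<gamma> \<and> \<gamma> < 1 \<and> real k / \<gamma> \<le> sqrt (real n) / 100 \<longrightarrow>
              real (NCC_DISJ n k \<gamma>) \<ge> \<gamma>^2 * real n / (10^4 * real k) - 2 * log 2 (real n))"
proof (intro exI[of _ 4] allI impI, elim conjE)
  fix n k :: nat and \<gamma> :: real
  assume n: "4 \<le> n" and k: "2 \<le> k" "k \<le> n - 1" and \<gamma>: "0 < \<gamma>" "\<gamma> < 1"
    and "real k / \<gamma> \<le> sqrt (real n) / 100"
  \<comment> \<open>not needed by this argument\<close>
  have "0 < k" "k \<le> n" using k by auto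
  obtain P where P: "nd_computes n k \<gamma> P" "NCC_DISJ n k \<gamma> = nd_cost n k P"
    using NCC_DISJ_attained[OF k(1) \<open>k \<le> n\<close>, of \<gamma>] \<gamma>(2) by auto
  have "\<gamma>^2 * real n / (10^4 * real k) - 2 * log 2 (real n) \<le> \<gamma>^2 * real (n div k) / 64 - 1 - log 2 k"
    using ratio_bound_le_div_bound[OF n \<open>0 < k\<close> \<open>k \<le> n\<close>] \<gamma> by simp
  also have "\<dots> \<le> real (NCC_DISJ n k \<gamma>)"
    using nd_cost_lower_bound[OF P(1) \<open>0 < k\<close>] \<gamma> P(2) by simp
  finally show "\<gamma>^2 * real n / (10^4 * real k) - 2 * log 2 (real n) \<le> real (NCC_DISJ n k \<gamma>)" .
qed

end
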